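(* Let $\Omega$ be a finite set with a metric $\rho$, and let $\mathrm D$ denote either the total variation distance or the earth mover's distance $\mathrm{EM}_\rho$ between probability distributions on $\Omega$. Let $t>0$, $B>0$ and $B^1,\dots,B^n>0$. Let $(P_p)_{p\in[B,(1+t)B]}$ and, for each $i$, $(Q^i_p)_{p\in[B^i,(1+t)B^i]}$ be measurable families of probability distributions on $\Omega$, and let $P$ (resp. $Q^i$) be the mixture obtained by drawing $p$ uniformly from $[B,(1+t)B]$ (resp. $[B^i,(1+t)B^i]$) and then sampling from $P_p$ (resp. $Q^i_p$). Suppose $M\ge 0$ satisfies $\mathrm D(P_p,Q^i_{q})\le M$ for all $i$, all $p\in[B,(1+t)B]$ and all $q\in[B^i,(1+t)B^i]$. Then \[\frac1n\sum_{i=1}^n \mathrm D(P,Q^i)\le \frac1{tB}\int_B^{(1+t)B}\Bigl(\frac1n\sum_{i=1}^n \mathrm D(P_p,Q^i_p)\Bigr)\,\mathrm dp+\frac Mn\cdot\frac{1+t}{t}\sum_{i=1}^n\Bigl|1-\frac{B^i}{B}\Bigr|,\] where $\mathrm D(P_p,Q^i_p)$ is interpreted as $0$ when $p\notin[B^i,(1+t)B^i]$.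
   Context: $\mathrm{EM}_\rho(\mathcal X_1,\mathcal X_2)=\min_{\mathcal D}\mathbb{E}_{(X_1,X_2)\sim\mathcal D}\rho(X_1,X_2)$ over couplings $\mathcal D$ with marginals $\mathcal X_1,\mathcal X_2$; the total variation distance is $\mathrm{TV}(\mathcal X_1,\mathcal X_2)=\max_{A\subseteq\Omega}|\mathcal X_1(A)-\mathcal X_2(A)|$. *)

theory Defs
  imports "HOL-Probability.Probability"
begin

text \<open>Distributions on the finite set Omega are pmfs on a finite type.\<close>

definition is_metric :: "('a \<Rightarrow> 'a \<Rightarrow> real) \<Rightarrow> bool" where
  "is_metric \<rho> \<longleftrightarrow> (\<forall>x y. 0 \<le> \<rho> x y) \<and> (\<forall>x y. \<rho> x y = 0 \<longleftrightarrow> x = y)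
     \<and> (\<forall>x y. \<rho> x y = \<rho> y x) \<and> (\<forall>x y z. \<rho> x z \<le> \<rho> x y + \<rho> y z)"

definition TV :: "'a::finite pmf \<Rightarrow> 'a pmf \<Rightarrow> real" where
  "TV P Q = Max ((\<lambda>A. \<bar>measure_pmf.prob P A - measure_pmf.prob Q A\<bar>) ` UNIV)"

definition couplings :: "'a pmf \<Rightarrow> 'b pmf \<Rightarrow> ('a \<times> 'b) pmf set" where
  "couplings P Q = {C. map_pmf fst C = P \<and> map_pmf snd C = Q}"

definition EM :: "('a::finite \<Rightarrow> 'a \<Rightarrow> real) \<Rightarrow> 'a pmf \<Rightarrow> 'a pmf \<Rightarrow> real" where
  "EM \<rho> P Q = (INF C \<in> couplings P Q. measure_pmf.expectation C (\<lambda>(x, y). \<rho> x y))"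

end

theory Submission
  imports Defs
begin

text \<open>
  Both distances are suprema of the linear functionals \<open>E\<^sub>P f - E\<^sub>Q g\<close> over a countable
  family of test pairs \<open>(f, g)\<close>: pairs of indicators for TV, and rational Kantorovich potentials
  (\<open>f x - g y \<le> \<rho> x y\<close>) for the earth mover's distance, by approximate Kantorovich duality.
  Countability makes \<open>p \<mapsto> D(P\<^sub>p, Q\<^sub>p)\<close> measurable. For a fixed test pair the functional
  of the two mixtures is \<open>\<integral> u a - \<integral> v b\<close> with uniform densities \<open>u\<close>, \<open>v\<close> and
  \<open>a p = E\<^bsub>P\<^sub>p\<^esub> f\<close>, \<open>b q = E\<^bsub>Q\<^sub>q\<^esub> g\<close>. Because \<open>a p - b q \<le> M\<close> throughout and
  \<open>a p - b p \<le> D(P\<^sub>p, Q\<^sub>p)\<close> where both densities are positive, the common mass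
  \<open>min u v\<close> contributes the averaged distance and the remaining mass \<open>1 - \<integral> min u v\<close>,
  which is at most \<open>(1+t)/t \<bar>1 - B\<^sup>i/B\<bar>\<close>, contributes at most \<open>M\<close> per unit.
\<close>

section \<open>Test functionals\<close>

definition dual_objective :: "('a \<Rightarrow> real) \<Rightarrow> ('a \<Rightarrow> real) \<Rightarrow> 'a pmf \<Rightarrow> 'a pmf \<Rightarrow> real" where
  "dual_objective f g P Q = measure_pmf.expectation P f - measure_pmf.expectation Q g"

lemma expectation_finite_pmf:
  fixes P :: "'a::finite pmf"
  shows "measure_pmf.expectation P f = (\<Sum>x\<in>UNIV. f x * pmf P x)"
  by (rule integral_measure_pmf_real) auto

lemma dual_objective_perturb:
  assumes "\<And>x. f x \<le> f' x + d" and "\<And>y. g' y \<le> g y + d"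
  shows "dual_objective f g (P :: 'a::finite pmf) Q \<le> dual_objective f' g' P Q + 2 * d"
proof -
  have "measure_pmf.expectation P f \<le> measure_pmf.expectation P (\<lambda>x. f' x + d)"
    "measure_pmf.expectation Q g' \<le> measure_pmf.expectation Q (\<lambda>y. g y + d)"
    using assms by (auto intro!: integral_mono integrable_measure_pmf_finite)
  then show ?thesis
    by (simp add: dual_objective_def integrable_measure_pmf_finite)
qed

lemma pair_pmf_in_couplings: "pair_pmf P Q \<in> couplings P Q"
  by (simp add: couplings_def map_fst_pair_pmf map_snd_pair_pmf)

lemma dual_objective_coupling:
  fixes P Q :: "'a::finite pmf"
  assumes "C \<in> couplings P Q"
  shows "dual_objective f g P Q = measure_pmf.expectation C (\<lambda>(x, y). f x - g y)"
proof -
  have "measure_pmf.expectation C (\<lambda>(x, y). f x - g y)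
      = measure_pmf.expectation C (\<lambda>z. f (fst z)) - measure_pmf.expectation C (\<lambda>z. g (snd z))"
    unfolding case_prod_beta
    by (rule Bochner_Integration.integral_diff) (auto intro: integrable_measure_pmf_finite)
  with assms show ?thesis
    by (auto simp: dual_objective_def couplings_def)
qed

lemma EM_le_expectation:
  fixes \<rho> :: "'a::finite \<Rightarrow> 'a \<Rightarrow> real"
  assumes "C \<in> couplings P Q"
  shows "EM \<rho> P Q \<le> measure_pmf.expectation C (\<lambda>(x, y). \<rho> x y)"
proof -
  have "Min (range (case_prod \<rho>)) \<le> measure_pmf.expectation C' (\<lambda>(x, y). \<rho> x y)" for C'
    by (rule measure_pmf.integral_ge_const) (auto intro: integrable_measure_pmf_finite)
  then have "bdd_below ((\<lambda>C. measure_pmf.expectation C (\<lambda>(x, y). \<rho> x y)) ` couplings P Q)"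
    by (meson bdd_belowI2)
  then show ?thesis
    unfolding EM_def using assms by (rule cINF_lower)
qed

lemma EM_weak_duality:
  fixes \<rho> :: "'a::finite \<Rightarrow> 'a \<Rightarrow> real"
  assumes "\<And>x y. f x - g y \<le> \<rho> x y"
  shows "dual_objective f g P Q \<le> EM \<rho> P Q"
  unfolding EM_def
proof (rule cINF_greatest)
  show "couplings P Q \<noteq> {}"
    using pair_pmf_in_couplings by blast
  fix C assume "C \<in> couplings P Q"
  then show "dual_objective f g P Q \<le> measure_pmf.expectation C (\<lambda>(x, y). \<rho> x y)"
    by (auto simp: dual_objective_coupling intro!: integral_mono integrable_measure_pmf_finite assms)
qed

section \<open>Approximate Kantorovich duality on a finite space\<close>

lemma pmf_map_finite:
  fixes C :: "'a::finite pmf"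
  shows "pmf (map_pmf h C) y = (\<Sum>z | h z = y. pmf C z)"
  by (simp add: pmf_map measure_measure_pmf_finite vimage_def)

lemma coupling_of_plan:
  fixes \<mu> :: "'a::finite \<times> 'a \<Rightarrow> real"
  assumes nonneg: "\<And>z. 0 \<le> \<mu> z"
    and fst_marginal: "\<And>x. (\<Sum>z | fst z = x. \<mu> z) = pmf P x"
    and snd_marginal: "\<And>y. (\<Sum>z | snd z = y. \<mu> z) = pmf Q y"
  obtains C where "C \<in> couplings P Q" and "\<And>z. pmf C z = \<mu> z"
proof -
  have "(\<Sum>z\<in>UNIV. \<mu> z) = (\<Sum>x\<in>UNIV. \<Sum>z | fst z = x. \<mu> z)"
    using sum.group[of UNIV UNIV fst \<mu>] by simp
  also have "\<dots> = 1"
    by (simp add: fst_marginal sum_pmf_eq_1)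
  finally have "(\<integral>\<^sup>+z. ennreal (\<mu> z) \<partial>count_space UNIV) = 1"
    by (simp add: nn_integral_count_space_finite nonneg)
  then have pmf_C: "pmf (embed_pmf \<mu>) z = \<mu> z" for z
    by (rule pmf_embed_pmf[OF nonneg])
  have "embed_pmf \<mu> \<in> couplings P Q"
    unfolding couplings_def
    by (auto intro!: pmf_eqI simp: pmf_map_finite pmf_C fst_marginal snd_marginal)
  then show thesis
    using pmf_C by (rule that)
qed

text \<open>
  A point \<open>(x, y, e)\<close> of the transport cone is a nonnegative combination of transport plans
  between point masses: \<open>x\<close> and \<open>y\<close> are its marginals and \<open>e\<close> is its cost plus a slack.
\<close>

definition transport_vector :: "('a::finite \<Rightarrow> 'a \<Rightarrow> real) \<Rightarrow> 'a \<times> 'a \<Rightarrow> (real^'a) \<times> (real^'a) \<times> real" where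
  "transport_vector \<rho> z = (axis (fst z) 1, axis (snd z) 1, \<rho> (fst z) (snd z))"

definition transport_cone :: "('a::finite \<Rightarrow> 'a \<Rightarrow> real) \<Rightarrow> ((real^'a) \<times> (real^'a) \<times> real) set" where
  "transport_cone \<rho> = {(\<Sum>z\<in>UNIV. \<mu> z *\<^sub>R transport_vector \<rho> z) + r *\<^sub>R (0, 0, 1) | \<mu> r.
     (\<forall>z. 0 \<le> \<mu> z) \<and> 0 \<le> r}"

lemma convex_cone_transport_cone: "convex_cone (transport_cone \<rho>)"
  unfolding convex_cone_iff
proof (intro conjI ballI allI impI)
  show "0 \<in> transport_cone \<rho>"
    unfolding transport_cone_def by (auto intro!: exI[of _ "\<lambda>_. 0"] exI[of _ 0] simp: zero_prod_def[symmetric])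
next
  fix a b assume "a \<in> transport_cone \<rho>" "b \<in> transport_cone \<rho>"
  then obtain \<mu>1 r1 \<mu>2 r2 where
    "a = (\<Sum>z\<in>UNIV. \<mu>1 z *\<^sub>R transport_vector \<rho> z) + r1 *\<^sub>R (0, 0, 1)" "\<forall>z. 0 \<le> \<mu>1 z" "0 \<le> r1"
    "b = (\<Sum>z\<in>UNIV. \<mu>2 z *\<^sub>R transport_vector \<rho> z) + r2 *\<^sub>R (0, 0, 1)" "\<forall>z. 0 \<le> \<mu>2 z" "0 \<le> r2"
    unfolding transport_cone_def by blast
  then show "a + b \<in> transport_cone \<rho>"
    unfolding transport_cone_def
    by (auto intro!: exI[of _ "\<lambda>z. \<mu>1 z + \<mu>2 z"] exI[of _ "r1 + r2"]
        simp: sum.distrib algebra_simps)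
next
  fix a and c :: real assume "a \<in> transport_cone \<rho>" "0 \<le> c"
  then obtain \<mu> r where
    "a = (\<Sum>z\<in>UNIV. \<mu> z *\<^sub>R transport_vector \<rho> z) + r *\<^sub>R (0, 0, 1)" "\<forall>z. 0 \<le> \<mu> z" "0 \<le> r"
    unfolding transport_cone_def by blast
  with \<open>0 \<le> c\<close> show "c *\<^sub>R a \<in> transport_cone \<rho>"
    unfolding transport_cone_def
    by (auto intro!: exI[of _ "\<lambda>z. c * \<mu> z"] exI[of _ "c * r"]
        simp: scaleR_add_right scaleR_sum_right)
qed

lemma convex_cone_hull_subset_transport_cone:
  "convex_cone hull (insert (0, 0, 1) (range (transport_vector \<rho>))) \<subseteq> transport_cone \<rho>"
proof (rule hull_minimal)
  have "(0, 0, 1) \<in> transport_cone \<rho>"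
    unfolding transport_cone_def by (auto intro!: exI[of _ "\<lambda>_. 0"] exI[of _ 1])
  moreover have "transport_vector \<rho> w \<in> transport_cone \<rho>" for w
  proof -
    have "(\<Sum>z\<in>UNIV. (if z = w then 1 else 0) *\<^sub>R transport_vector \<rho> z) = transport_vector \<rho> w"
      by (simp add: if_distrib[of "\<lambda>c. c *\<^sub>R _"] cong: if_cong)
    then show ?thesis
      unfolding transport_cone_def
      by (auto intro!: exI[of _ "\<lambda>z. if z = w then 1 else 0"] exI[of _ 0] simp: zero_prod_def[symmetric])
  qed
  ultimately show "insert (0, 0, 1) (range (transport_vector \<rho>)) \<subseteq> transport_cone \<rho>"
    by blast
qed (rule convex_cone_transport_cone)

lemma sum_axis_component:
  fixes \<mu> :: "'b::finite \<Rightarrow> real"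
  shows "(\<Sum>z\<in>UNIV. \<mu> z *\<^sub>R axis (h z) 1) $ x = (\<Sum>z | h z = x. \<mu> z)"
  by (simp add: axis_def, rule sum.mono_neutral_cong_right) auto

lemma EM_le_transport_cone:
  fixes \<rho> :: "'a::finite \<Rightarrow> 'a \<Rightarrow> real"
  assumes "((\<chi> x. pmf P x), (\<chi> y. pmf Q y), e) \<in> transport_cone \<rho>"
  shows "EM \<rho> P Q \<le> e"
proof -
  obtain \<mu> r where nonneg: "\<forall>z. 0 \<le> \<mu> z" "0 \<le> r" and
    eq: "((\<chi> x. pmf P x), (\<chi> y. pmf Q y), e) = (\<Sum>z\<in>UNIV. \<mu> z *\<^sub>R transport_vector \<rho> z) + r *\<^sub>R (0, 0, 1)"
    using assms unfolding transport_cone_def by blast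
  have "(\<chi> x. pmf P x) = (\<Sum>z\<in>UNIV. \<mu> z *\<^sub>R axis (fst z) 1)"
    using arg_cong[OF eq, of fst] by (simp add: fst_sum transport_vector_def)
  from arg_cong[OF this, of "\<lambda>w. w $ x" for x] have P: "(\<Sum>z | fst z = x. \<mu> z) = pmf P x" for x
    by (simp only: vec_lambda_beta sum_axis_component)
  have "(\<chi> y. pmf Q y) = (\<Sum>z\<in>UNIV. \<mu> z *\<^sub>R axis (snd z) 1)"
    using arg_cong[OF eq, of "fst \<circ> snd"] by (simp add: fst_sum snd_sum transport_vector_def)
  from arg_cong[OF this, of "\<lambda>w. w $ y" for y] have Q: "(\<Sum>z | snd z = y. \<mu> z) = pmf Q y" for y
    by (simp only: vec_lambda_beta sum_axis_component)
  have e: "e = (\<Sum>z\<in>UNIV. \<mu> z * \<rho> (fst z) (snd z)) + r"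
    using arg_cong[OF eq, of "snd \<circ> snd"] by (simp add: snd_sum transport_vector_def)
  obtain C where C: "C \<in> couplings P Q" and pmf_C: "\<And>z. pmf C z = \<mu> z"
    using coupling_of_plan[OF _ P Q] nonneg by blast
  have "EM \<rho> P Q \<le> measure_pmf.expectation C (\<lambda>(x, y). \<rho> x y)"
    by (rule EM_le_expectation[OF C])
  also have "\<dots> = (\<Sum>z\<in>UNIV. \<mu> z * \<rho> (fst z) (snd z))"
    by (simp add: expectation_finite_pmf pmf_C case_prod_beta mult.commute)
  finally show ?thesis
    using e nonneg by simp
qed

lemma separating_hyperplane_closed_convex_cone:
  fixes z :: "'a::{real_inner, heine_borel}"
  assumes "convex_cone S" and "closed S" and "z \<notin> S"
  obtains a where "inner a z < 0" and "\<And>x. x \<in> S \<Longrightarrow> 0 \<le> inner a x"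
proof -
  obtain a b where ab: "inner a z < b" "\<And>x. x \<in> S \<Longrightarrow> b < inner a x"
    using separating_hyperplane_closed_point[of S z] assms by (auto simp: convex_cone_def)
  have "b < 0"
    using ab(2)[OF convex_cone_contains_0[OF assms(1)]] by simp
  have "0 \<le> inner a x" if "x \<in> S" for x
  proof (rule ccontr)
    assume "\<not> 0 \<le> inner a x"
    then have "(b / inner a x) *\<^sub>R x \<in> S"
      using \<open>b < 0\<close> \<open>x \<in> S\<close> assms(1) by (auto simp: convex_cone_def conic_def divide_nonpos_neg)
    with ab(2) show False
      using \<open>\<not> 0 \<le> inner a x\<close> by fastforce
  qed
  with ab(1) \<open>b < 0\<close> show thesis
    by (intro that) auto
qed

text \<open>
  The point \<open>(P, Q, EM \<rho> P Q - \<epsilon>)\<close> lies outside the closed transport cone; a separating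
  functional \<open>(u, v, s)\<close> has \<open>s > 0\<close>, and \<open>-u/s\<close>, \<open>v/s\<close> are the required potentials.
\<close>

lemma EM_approx_dual:
  fixes \<rho> :: "'a::finite \<Rightarrow> 'a \<Rightarrow> real"
  assumes "0 < \<epsilon>"
  obtains f g where "\<And>x y. f x - g y \<le> \<rho> x y" and "EM \<rho> P Q - \<epsilon> < dual_objective f g P Q"
proof -
  define H where "H = convex_cone hull (insert (0, 0, 1) (range (transport_vector \<rho>)))"
  define z where "z = ((\<chi> x. pmf P x), (\<chi> y. pmf Q y), EM \<rho> P Q - \<epsilon>)"
  have "z \<notin> H"
    using EM_le_transport_cone[of P Q _ \<rho>] convex_cone_hull_subset_transport_cone[of \<rho>] assms
    unfolding H_def z_def by fastforce
  moreover have "closed H"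
    unfolding H_def by (rule closed_convex_cone_hull) simp
  ultimately obtain a where a_z: "inner a z < 0" and a_H: "\<And>w. w \<in> H \<Longrightarrow> 0 \<le> inner a w"
    using separating_hyperplane_closed_convex_cone[of H z] unfolding H_def
    by (metis convex_cone_convex_cone_hull)
  obtain u v s where a: "a = (u, v, s)"
    by (cases a) auto
  define f where "f x = - u $ x" for x
  define g where "g y = v $ y" for y
  have feasible: "f x - g y \<le> s * \<rho> x y" for x y
  proof -
    have "transport_vector \<rho> (x, y) \<in> H"
      unfolding H_def by (rule hull_inc) simp
    from a_H[OF this] show ?thesis
      by (simp add: a f_def g_def transport_vector_def inner_axis)
  qed
  have "(0, 0, 1) \<in> H"
    unfolding H_def by (rule hull_inc) simp
  from a_H[OF this] have "0 \<le> s"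
    by (simp add: a)
  have "inner a z = s * (EM \<rho> P Q - \<epsilon>) - dual_objective f g P Q"
    by (simp add: a z_def f_def g_def inner_vec_def dual_objective_def expectation_finite_pmf
        sum_negf mult.commute)
  with a_z have less: "s * (EM \<rho> P Q - \<epsilon>) < dual_objective f g P Q"
    by simp
  have "dual_objective f g P Q \<le> measure_pmf.expectation (pair_pmf P Q) (\<lambda>(x, y). s * \<rho> x y)"
    unfolding dual_objective_coupling[OF pair_pmf_in_couplings]
    by (auto intro!: integral_mono integrable_measure_pmf_finite feasible)
  also have "\<dots> = s * measure_pmf.expectation (pair_pmf P Q) (\<lambda>(x, y). \<rho> x y)"
    unfolding case_prod_beta by (rule integral_mult_right_zero)
  finally have "dual_objective f g P Q \<le> s * measure_pmf.expectation (pair_pmf P Q) (\<lambda>(x, y). \<rho> x y)" .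
  with less \<open>0 \<le> s\<close> have "0 < s"
    by (cases "s = 0") auto
  show thesis
  proof (rule that)
    show "f x / s - g y / s \<le> \<rho> x y" for x y
      using feasible[of x y] \<open>0 < s\<close> by (simp add: field_simps)
    have "dual_objective (\<lambda>x. f x / s) (\<lambda>y. g y / s) P Q = dual_objective f g P Q / s"
      by (simp add: dual_objective_def diff_divide_distrib)
    with less \<open>0 < s\<close> show "EM \<rho> P Q - \<epsilon> < dual_objective (\<lambda>x. f x / s) (\<lambda>y. g y / s) P Q"
      by (simp add: pos_less_divide_eq mult.commute)
  qed
qed

section \<open>Distances with a countable dual representation\<close>

text \<open>
  Countability of the test family is what makes \<open>D\<close> measurable along measurable families of
  distributions.
\<close>

definition dual_representation ::
    "(('a \<Rightarrow> real) \<times> ('a \<Rightarrow> real)) set \<Rightarrow> ('a pmf \<Rightarrow> 'a pmf \<Rightarrow> real) \<Rightarrow> bool" where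
  "dual_representation F D \<longleftrightarrow> countable F \<and> (\<lambda>_. 0, \<lambda>_. 0) \<in> F \<and>
     (\<forall>P Q. \<forall>(f, g)\<in>F. dual_objective f g P Q \<le> D P Q) \<and>
     (\<forall>P Q \<epsilon>. 0 < \<epsilon> \<longrightarrow> (\<exists>(f, g)\<in>F. D P Q - \<epsilon> < dual_objective f g P Q))"

lemma dual_representation_le:
  "dual_representation F D \<Longrightarrow> (f, g) \<in> F \<Longrightarrow> dual_objective f g P Q \<le> D P Q"
  unfolding dual_representation_def by fast

lemma dual_representation_approx:
  assumes "dual_representation F D" and "0 < \<epsilon>"
  obtains f g where "(f, g) \<in> F" and "D P Q - \<epsilon> < dual_objective f g P Q"
  using assms unfolding dual_representation_def by fast

lemma dual_representation_nonneg:
  assumes "dual_representation F D"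
  shows "0 \<le> D P Q"
proof -
  have "dual_objective (\<lambda>_. 0) (\<lambda>_. 0) P Q \<le> D P Q"
    using assms by (rule dual_representation_le) (use assms in \<open>simp add: dual_representation_def\<close>)
  then show ?thesis
    by (simp add: dual_objective_def)
qed

lemma dual_representation_SUP:
  assumes "dual_representation F D"
  shows "D P Q = (SUP (f, g)\<in>F. dual_objective f g P Q)"
proof (rule antisym)
  have "F \<noteq> {}"
    using assms by (auto simp: dual_representation_def)
  have le: "\<And>fg. fg \<in> F \<Longrightarrow> (case fg of (f, g) \<Rightarrow> dual_objective f g P Q) \<le> D P Q"
    using dual_representation_le[OF assms] by auto
  with \<open>F \<noteq> {}\<close> show "(SUP (f, g)\<in>F. dual_objective f g P Q) \<le> D P Q"
    by (rule cSUP_least)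
  from le have bdd: "bdd_above ((\<lambda>(f, g). dual_objective f g P Q) ` F)"
    by (rule bdd_aboveI2)
  show "D P Q \<le> (SUP (f, g)\<in>F. dual_objective f g P Q)"
  proof (rule field_le_epsilon)
    fix \<epsilon> :: real assume "0 < \<epsilon>"
    with assms obtain f g where fg: "(f, g) \<in> F" "D P Q - \<epsilon> < dual_objective f g P Q"
      by (rule dual_representation_approx)
    have "dual_objective f g P Q \<le> (SUP (f, g)\<in>F. dual_objective f g P Q)"
      using cSUP_upper[OF fg(1) bdd] by simp
    with fg(2) show "D P Q \<le> (SUP (f, g)\<in>F. dual_objective f g P Q) + \<epsilon>"
      by simp
  qed
qed

lemma dual_objective_indicator:
  "dual_objective (indicator A) (indicator A) P Q = measure_pmf.prob P A - measure_pmf.prob Q A"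
  by (simp add: dual_objective_def)

lemma dual_representation_TV:
  "dual_representation ((\<lambda>A. (indicator A, indicator A)) ` UNIV) (TV :: 'a::finite pmf \<Rightarrow> _)"
  unfolding dual_representation_def
proof (intro conjI allI impI ballI)
  show "(\<lambda>_. 0, \<lambda>_. 0) \<in> (\<lambda>A. (indicator A, indicator A)) ` (UNIV :: 'a set set)"
    by (rule image_eqI[of _ _ "{}"]) auto
next
  fix P Q :: "'a pmf" and fg :: "('a \<Rightarrow> real) \<times> ('a \<Rightarrow> real)"
  assume "fg \<in> (\<lambda>A. (indicator A, indicator A)) ` UNIV"
  then obtain A where "fg = (indicator A, indicator A)"
    by auto
  moreover have "\<bar>measure_pmf.prob P A - measure_pmf.prob Q A\<bar> \<le> TV P Q"
    unfolding TV_def by (rule Max_ge) auto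
  ultimately show "case fg of (f, g) \<Rightarrow> dual_objective f g P Q \<le> TV P Q"
    by (simp add: dual_objective_indicator)
next
  fix P Q :: "'a pmf" and \<epsilon> :: real assume "0 < \<epsilon>"
  have "TV P Q \<in> (\<lambda>A. \<bar>measure_pmf.prob P A - measure_pmf.prob Q A\<bar>) ` UNIV"
    unfolding TV_def by (rule Max_in) auto
  then obtain A where A: "TV P Q = \<bar>measure_pmf.prob P A - measure_pmf.prob Q A\<bar>"
    by auto
  have "measure_pmf.prob P (- A) - measure_pmf.prob Q (- A) = measure_pmf.prob Q A - measure_pmf.prob P A"
    using measure_pmf.prob_compl[of A P] measure_pmf.prob_compl[of A Q] by (simp add: Compl_eq_Diff_UNIV)
  then have "TV P Q = dual_objective (indicator A) (indicator A) P Q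
      \<or> TV P Q = dual_objective (indicator (- A)) (indicator (- A)) P Q"
    unfolding dual_objective_indicator A by linarith
  then show "\<exists>(f, g)\<in>(\<lambda>A. (indicator A, indicator A)) ` UNIV. TV P Q - \<epsilon> < dual_objective f g P Q"
  proof
    assume "TV P Q = dual_objective (indicator A) (indicator A) P Q"
    with \<open>0 < \<epsilon>\<close> show ?thesis
      by (intro bexI[of _ "(indicator A, indicator A)"]) auto
  next
    assume "TV P Q = dual_objective (indicator (- A)) (indicator (- A)) P Q"
    with \<open>0 < \<epsilon>\<close> show ?thesis
      by (intro bexI[of _ "(indicator (- A), indicator (- A))"]) auto
  qed
qed (simp add: countable_finite)

lemma exists_rational_below:
  fixes f :: "'a \<Rightarrow> real"
  assumes "0 < d"
  obtains h where "range h \<subseteq> \<rat>" and "\<And>x. f x - d < h x" and "\<And>x. h x < f x"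
proof -
  have "\<forall>x. \<exists>q\<in>\<rat>. f x - d < q \<and> q < f x"
    using Rats_dense_in_real[of "f x - d" "f x" for x] assms by auto
  then show thesis
    by (metis (mono_tags, lifting) image_subset_iff that)
qed

lemma countable_rational_functions: "countable {f :: 'a::finite \<Rightarrow> real. range f \<subseteq> \<rat>}"
proof -
  have "{f :: 'a \<Rightarrow> real. range f \<subseteq> \<rat>} \<subseteq> range (\<lambda>r x. of_rat (r x))"
  proof
    fix f :: "'a \<Rightarrow> real" assume "f \<in> {f. range f \<subseteq> \<rat>}"
    then have "\<forall>x. \<exists>q. f x = of_rat q"
      by (auto simp: Rats_def)
    then obtain r where "\<And>x. f x = of_rat (r x)"
      by metis
    then show "f \<in> range (\<lambda>r x. of_rat (r x))"
      by auto
  qed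
  then show ?thesis
    by (rule countable_subset) simp
qed

lemma dual_representation_EM:
  fixes \<rho> :: "'a::finite \<Rightarrow> 'a \<Rightarrow> real"
  assumes "\<And>x y. 0 \<le> \<rho> x y"
  shows "dual_representation {(f, g). (\<forall>x y. f x - g y \<le> \<rho> x y) \<and> range f \<subseteq> \<rat> \<and> range g \<subseteq> \<rat>} (EM \<rho>)"
  unfolding dual_representation_def
proof (intro conjI allI impI ballI)
  have "countable ({f :: 'a \<Rightarrow> real. range f \<subseteq> \<rat>} \<times> {g :: 'a \<Rightarrow> real. range g \<subseteq> \<rat>})"
    by (intro countable_SIGMA countable_rational_functions)
  then show "countable {(f, g). (\<forall>x y. f x - g y \<le> \<rho> x y) \<and> range f \<subseteq> \<rat> \<and> range g \<subseteq> \<rat>}"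
    by (rule countable_subset[rotated]) auto
  show "(\<lambda>_. 0, \<lambda>_. 0) \<in> {(f, g). (\<forall>x y. f x - g y \<le> \<rho> x y) \<and> range f \<subseteq> \<rat> \<and> range g \<subseteq> \<rat>}"
    using assms by auto
next
  fix P Q fg assume "fg \<in> {(f, g). (\<forall>x y. f x - g y \<le> \<rho> x y) \<and> range f \<subseteq> \<rat> \<and> range g \<subseteq> \<rat>}"
  then show "case fg of (f, g) \<Rightarrow> dual_objective f g P Q \<le> EM \<rho> P Q"
    by (auto intro: EM_weak_duality)
next
  fix P Q and \<epsilon> :: real assume "0 < \<epsilon>"
  then have "0 < \<epsilon> / 2"
    by simp
  then obtain f g where fg: "\<And>x y. f x - g y \<le> \<rho> x y" "EM \<rho> P Q - \<epsilon> / 2 < dual_objective f g P Q"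
    by (rule EM_approx_dual[where \<rho> = \<rho> and P = P and Q = Q]) blast
  obtain f' where f': "range f' \<subseteq> \<rat>" "\<And>x. f x - \<epsilon> / 4 < f' x" "\<And>x. f' x < f x"
    using exists_rational_below[of "\<epsilon> / 4" f] \<open>0 < \<epsilon>\<close> by auto
  obtain g' where g': "range g' \<subseteq> \<rat>" "\<And>y. g y < g' y" "\<And>y. g' y < g y + \<epsilon> / 4"
    using exists_rational_below[of "\<epsilon> / 4" "\<lambda>y. g y + \<epsilon> / 4"] \<open>0 < \<epsilon>\<close> by auto
  have "dual_objective f g P Q \<le> dual_objective f' g' P Q + 2 * (\<epsilon> / 4)"
    by (rule dual_objective_perturb) (use f' g' in \<open>auto simp: less_imp_le algebra_simps\<close>)
  moreover have "f' x - g' y \<le> \<rho> x y" for x y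
    using fg(1)[of x y] f'(3)[of x] g'(2)[of y] by linarith
  ultimately show "\<exists>(f, g)\<in>{(f, g). (\<forall>x y. f x - g y \<le> \<rho> x y) \<and> range f \<subseteq> \<rat> \<and> range g \<subseteq> \<rat>}.
      EM \<rho> P Q - \<epsilon> < dual_objective f g P Q"
    using fg(2) f'(1) g'(1) by (intro bexI[of _ "(f', g')"]) auto
qed

section \<open>Mixtures\<close>

lemma weighted_difference_le:
  fixes u v a b c h M :: real
  assumes "0 \<le> u" "0 \<le> v" and a_le: "0 < u \<Longrightarrow> a \<le> c + M" and b_ge: "0 < v \<Longrightarrow> c \<le> b"
    and diagonal: "0 < u \<Longrightarrow> 0 < v \<Longrightarrow> a - b \<le> h" and "0 \<le> h"
  shows "u * a - v * b \<le> u * h + M * (u - min u v) + c * (u - v)"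
proof -
  have "min u v * (a - b) \<le> u * h"
  proof (cases "0 < u \<and> 0 < v")
    case True
    then have "min u v * (a - b) \<le> min u v * h"
      using diagonal by (intro mult_left_mono) auto
    also have "\<dots> \<le> u * h"
      using \<open>0 \<le> h\<close> by (intro mult_right_mono) auto
    finally show ?thesis .
  qed (use assms in \<open>auto simp: min_def\<close>)
  moreover have "(u - min u v) * (a - c) \<le> (u - min u v) * M"
    using assms by (cases "v < u") (auto simp: min_def intro!: mult_left_mono)
  moreover have "(v - min u v) * c \<le> (v - min u v) * b"
    using assms by (cases "u < v") (auto simp: min_def intro!: mult_left_mono)
  ultimately show ?thesis
    by (simp add: algebra_simps)
qed

lemma integral_diff_le_overlap:
  fixes u v a b h :: "'b \<Rightarrow> real"
  assumes u_nonneg: "\<And>p. 0 \<le> u p" and v_nonneg: "\<And>p. 0 \<le> v p"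
    and u_int: "integrable N u" and v_int: "integrable N v"
    and u_one: "(\<integral>p. u p \<partial>N) = 1" and v_one: "(\<integral>p. v p \<partial>N) = 1"
    and ua_int: "integrable N (\<lambda>p. u p * a p)" and vb_int: "integrable N (\<lambda>p. v p * b p)"
    and uh_int: "integrable N (\<lambda>p. u p * h p)"
    and across: "\<And>p q. 0 < u p \<Longrightarrow> 0 < v q \<Longrightarrow> a p - b q \<le> M"
    and diagonal: "\<And>p. 0 < u p \<Longrightarrow> 0 < v p \<Longrightarrow> a p - b p \<le> h p"
    and h_nonneg: "\<And>p. 0 \<le> h p"
  shows "(\<integral>p. u p * a p \<partial>N) - (\<integral>p. v p * b p \<partial>N)
    \<le> (\<integral>p. u p * h p \<partial>N) + M * (1 - (\<integral>p. min (u p) (v p) \<partial>N))"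
proof -
  have "\<exists>p. 0 < w p" if "\<And>p. 0 \<le> w p" and "(\<integral>p. w p \<partial>N) = 1" for w :: "'b \<Rightarrow> real"
  proof (rule ccontr)
    assume "\<nexists>p. 0 < w p"
    with that(1) have "w = (\<lambda>_. 0)"
      by (simp add: fun_eq_iff not_less order_antisym)
    with that(2) show False
      by simp
  qed
  then obtain p0 q0 where "0 < u p0" and "0 < v q0"
    using u_nonneg u_one v_nonneg v_one by meson
  \<comment> \<open>\<open>a \<le> c + M\<close> on the support of \<open>u\<close> and \<open>c \<le> b\<close> on that of \<open>v\<close>; subtracting \<open>c\<close> costs nothing
    since \<open>u\<close> and \<open>v\<close> have the same mass.\<close>
  define c where "c = (SUP p\<in>{p. 0 < u p}. a p) - M"
  have bdd: "bdd_above (a ` {p. 0 < u p})"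
    using across[OF _ \<open>0 < v q0\<close>] by (auto intro!: bdd_aboveI[of _ "b q0 + M"] simp: algebra_simps)
  have a_le: "a p \<le> c + M" if "0 < u p" for p
    using cSUP_upper[OF _ bdd, of p] that by (simp add: c_def)
  have b_ge: "c \<le> b q" if "0 < v q" for q
  proof -
    have "(SUP p\<in>{p. 0 < u p}. a p) \<le> b q + M"
      using \<open>0 < u p0\<close> across[OF _ that] by (intro cSUP_least) (auto simp: algebra_simps)
    then show ?thesis
      by (simp add: c_def)
  qed
  have pointwise: "u p * a p - v p * b p
      \<le> u p * h p + M * (u p - min (u p) (v p)) + c * (u p - v p)" for p
    using u_nonneg v_nonneg a_le b_ge diagonal h_nonneg by (rule weighted_difference_le)
  have min_int: "integrable N (\<lambda>p. min (u p) (v p))"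
    using u_int v_int by (rule integrable_min)
  have "(\<integral>p. u p * a p \<partial>N) - (\<integral>p. v p * b p \<partial>N) = (\<integral>p. u p * a p - v p * b p \<partial>N)"
    using ua_int vb_int by simp
  also have "\<dots> \<le> (\<integral>p. u p * h p + M * (u p - min (u p) (v p)) + c * (u p - v p) \<partial>N)"
    using pointwise ua_int vb_int uh_int u_int v_int min_int by (intro integral_mono) auto
  also have "\<dots> = (\<integral>p. u p * h p \<partial>N) + M * (1 - (\<integral>p. min (u p) (v p) \<partial>N))"
    using uh_int u_int v_int min_int u_one v_one by simp
  finally show ?thesis .
qed

lemma mixture_expectation:
  fixes R :: "'b \<Rightarrow> 'a::finite pmf" and u :: "'b \<Rightarrow> real"
  assumes u_nonneg: "\<And>p. 0 \<le> u p" and u_int: "integrable N u"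
    and R_meas: "\<And>\<omega>. (\<lambda>p. u p * pmf (R p) \<omega>) \<in> borel_measurable N"
    and P_mix: "\<And>\<omega>. pmf P \<omega> = (\<integral>p. u p * pmf (R p) \<omega> \<partial>N)"
  shows "integrable N (\<lambda>p. u p * measure_pmf.expectation (R p) f)"
    and "measure_pmf.expectation P f = (\<integral>p. u p * measure_pmf.expectation (R p) f \<partial>N)"
proof -
  have weight_int: "integrable N (\<lambda>p. u p * pmf (R p) \<omega>)" for \<omega>
  proof (rule Bochner_Integration.integrable_bound[OF u_int R_meas])
    show "AE p in N. norm (u p * pmf (R p) \<omega>) \<le> norm (u p)"
      using u_nonneg by (auto intro!: mult_left_le simp: pmf_le_1)
  qed
  have eq: "u p * measure_pmf.expectation (R p) f = (\<Sum>x\<in>UNIV. f x * (u p * pmf (R p) x))" for p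
    by (simp add: expectation_finite_pmf sum_distrib_left mult_ac)
  show "integrable N (\<lambda>p. u p * measure_pmf.expectation (R p) f)"
    unfolding eq using weight_int by simp
  show "measure_pmf.expectation P f = (\<integral>p. u p * measure_pmf.expectation (R p) f \<partial>N)"
    unfolding eq using weight_int by (simp add: expectation_finite_pmf P_mix)
qed

lemma borel_measurable_dual_representation:
  fixes D :: "'a::finite pmf \<Rightarrow> 'a pmf \<Rightarrow> real" and u v :: "'b \<Rightarrow> real"
  assumes F: "dual_representation F D"
    and [measurable]: "u \<in> borel_measurable N" "v \<in> borel_measurable N"
    and [measurable]: "\<And>\<omega>. (\<lambda>p. u p * pmf (R p) \<omega>) \<in> borel_measurable N"
    and [measurable]: "\<And>\<omega>. (\<lambda>p. v p * pmf (S p) \<omega>) \<in> borel_measurable N"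
  shows "(\<lambda>p. if 0 < u p \<and> 0 < v p then D (R p) (S p) else 0) \<in> borel_measurable N"
proof -
  have "F \<noteq> {}"
    using F by (auto simp: dual_representation_def)
  then have sup: "(if 0 < u p \<and> 0 < v p then D (R p) (S p) else 0)
      = (SUP (f, g)\<in>F. if 0 < u p \<and> 0 < v p then dual_objective f g (R p) (S p) else 0)" for p
  proof (cases "0 < u p \<and> 0 < v p")
    case True
    then have "(\<lambda>(f, g). if 0 < u p \<and> 0 < v p then dual_objective f g (R p) (S p) else 0)
        = (\<lambda>(f, g). dual_objective f g (R p) (S p))"
      by auto
    with True show ?thesis
      by (simp add: dual_representation_SUP[OF F])
  next
    case False
    then have "(\<lambda>(f, g). if 0 < u p \<and> 0 < v p then dual_objective f g (R p) (S p) else 0) = (\<lambda>_. 0)"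
      by auto
    then have "(SUP (f, g)\<in>F. if 0 < u p \<and> 0 < v p then dual_objective f g (R p) (S p) else 0) = 0"
      by (simp only: cSUP_const[OF \<open>F \<noteq> {}\<close>])
    then show ?thesis
      by (simp only: if_not_P[OF False])
  qed
  have "(\<lambda>p. if 0 < u p \<and> 0 < v p then dual_objective f g (R p) (S p) else 0) \<in> borel_measurable N"
    for f g
  proof -
    \<comment> \<open>Only \<open>u p * pmf (R p) \<omega>\<close> is measurable, so \<open>pmf (R p) \<omega>\<close> is recovered by dividing by \<open>u p\<close>
      on the support of \<open>u\<close>; off the support the value is \<open>0\<close> anyway.\<close>
    have "(if 0 < u p \<and> 0 < v p then dual_objective f g (R p) (S p) else 0)
        = (if 0 < u p \<and> 0 < v p then (\<Sum>x\<in>UNIV. f x * (u p * pmf (R p) x / u p))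
             - (\<Sum>y\<in>UNIV. g y * (v p * pmf (S p) y / v p)) else 0)" for p
      by (simp add: dual_objective_def expectation_finite_pmf)
    then show ?thesis
      by simp
  qed
  moreover have "bdd_above ((\<lambda>(f, g). if 0 < u p \<and> 0 < v p then dual_objective f g (R p) (S p) else 0) ` F)" for p
    using dual_representation_le[OF F]
    by (intro bdd_aboveI2[of _ _ "if 0 < u p \<and> 0 < v p then D (R p) (S p) else 0"]) auto
  ultimately show ?thesis
    unfolding sup using F by (intro borel_measurable_cSUP) (auto simp: dual_representation_def split_beta')
qed

lemma dual_representation_mixture_le:
  fixes D :: "'a::finite pmf \<Rightarrow> 'a pmf \<Rightarrow> real" and u v :: "'b \<Rightarrow> real"
  assumes F: "dual_representation F D"
    and u_nonneg: "\<And>p. 0 \<le> u p" and v_nonneg: "\<And>p. 0 \<le> v p"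
    and u_int: "integrable N u" and v_int: "integrable N v"
    and u_one: "(\<integral>p. u p \<partial>N) = 1" and v_one: "(\<integral>p. v p \<partial>N) = 1"
    and R_meas: "\<And>\<omega>. (\<lambda>p. u p * pmf (R p) \<omega>) \<in> borel_measurable N"
    and S_meas: "\<And>\<omega>. (\<lambda>p. v p * pmf (S p) \<omega>) \<in> borel_measurable N"
    and P_mix: "\<And>\<omega>. pmf P \<omega> = (\<integral>p. u p * pmf (R p) \<omega> \<partial>N)"
    and Q_mix: "\<And>\<omega>. pmf Q \<omega> = (\<integral>p. v p * pmf (S p) \<omega> \<partial>N)"
    and bound: "\<And>p q. 0 < u p \<Longrightarrow> 0 < v q \<Longrightarrow> D (R p) (S q) \<le> M"
  shows "integrable N (\<lambda>p. u p * (if 0 < v p then D (R p) (S p) else 0))" (is "integrable N ?uh")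
    and "D P Q \<le> (\<integral>p. u p * (if 0 < v p then D (R p) (S p) else 0) \<partial>N)
                  + M * (1 - (\<integral>p. min (u p) (v p) \<partial>N))"
proof -
  have "?uh = (\<lambda>p. u p * (if 0 < u p \<and> 0 < v p then D (R p) (S p) else 0))"
  proof
    fix p
    show "?uh p = u p * (if 0 < u p \<and> 0 < v p then D (R p) (S p) else 0)"
      using u_nonneg[of p] by (cases "u p = 0") auto
  qed
  moreover have "(\<lambda>p. if 0 < u p \<and> 0 < v p then D (R p) (S p) else 0) \<in> borel_measurable N"
    using F u_int v_int R_meas S_meas by (intro borel_measurable_dual_representation) auto
  ultimately have "?uh \<in> borel_measurable N"
    using u_int by simp
  then show uh_int: "integrable N ?uh"
  proof (rule Bochner_Integration.integrable_bound[OF integrable_mult_right[OF u_int, of M]])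
    show "AE p in N. norm (?uh p) \<le> norm (M * u p)"
    proof (rule AE_I2)
      fix p
      show "norm (?uh p) \<le> norm (M * u p)"
      proof (cases "0 < u p \<and> 0 < v p")
        case True
        then have nonneg: "0 \<le> u p * D (R p) (S p)" and "u p * D (R p) (S p) \<le> M * u p"
          using bound[of p p] dual_representation_nonneg[OF F] by (auto simp: mult.commute intro: mult_left_mono)
        moreover have "?uh p = u p * D (R p) (S p)"
          using True by simp
        ultimately show ?thesis
          using abs_ge_self[of "M * u p"] by (simp only: real_norm_def abs_of_nonneg[OF nonneg])
      next
        case False
        with u_nonneg[of p] show ?thesis
          by auto
      qed
    qed
  qed
  show "D P Q \<le> (\<integral>p. ?uh p \<partial>N) + M * (1 - (\<integral>p. min (u p) (v p) \<partial>N))"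
  proof (rule field_le_epsilon)
    fix \<epsilon> :: real assume "0 < \<epsilon>"
    with F obtain f g where "(f, g) \<in> F" and approx: "D P Q - \<epsilon> < dual_objective f g P Q"
      by (rule dual_representation_approx)
    have "dual_objective f g P Q
        = (\<integral>p. u p * measure_pmf.expectation (R p) f \<partial>N) - (\<integral>p. v p * measure_pmf.expectation (S p) g \<partial>N)"
      unfolding dual_objective_def
      using mixture_expectation(2)[OF u_nonneg u_int R_meas P_mix]
        mixture_expectation(2)[OF v_nonneg v_int S_meas Q_mix] by simp
    also have "\<dots> \<le> (\<integral>p. ?uh p \<partial>N) + M * (1 - (\<integral>p. min (u p) (v p) \<partial>N))"
    proof (rule integral_diff_le_overlap[OF u_nonneg v_nonneg u_int v_int u_one v_one
          mixture_expectation(1)[OF u_nonneg u_int R_meas P_mix]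
          mixture_expectation(1)[OF v_nonneg v_int S_meas Q_mix] uh_int])
      fix p q assume "0 < u p" "0 < v q"
      then show "measure_pmf.expectation (R p) f - measure_pmf.expectation (S q) g \<le> M"
        using dual_representation_le[OF F \<open>(f, g) \<in> F\<close>, of "R p" "S q"] bound[of p q]
        by (simp add: dual_objective_def)
    next
      fix p assume "0 < u p" "0 < v p"
      then show "measure_pmf.expectation (R p) f - measure_pmf.expectation (S p) g
          \<le> (if 0 < v p then D (R p) (S p) else 0)"
        using dual_representation_le[OF F \<open>(f, g) \<in> F\<close>, of "R p" "S p"]
        by (simp add: dual_objective_def)
    next
      show "0 \<le> (if 0 < v p then D (R p) (S p) else 0)" for p
        using dual_representation_nonneg[OF F] by simp
    qed
    finally show "D P Q \<le> (\<integral>p. ?uh p \<partial>N) + M * (1 - (\<integral>p. min (u p) (v p) \<partial>N)) + \<epsilon>"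
      using approx by simp
  qed
qed

section \<open>Uniform mixtures on intervals\<close>

lemma uniform_density_Icc:
  fixes l r :: real
  assumes "l < r"
  shows "integrable lborel (\<lambda>p. indicator {l..r} p / (r - l))"
    and "(\<integral>p. indicator {l..r} p / (r - l) \<partial>lborel) = 1"
  using assms by (auto simp: emeasure_lborel_Icc_eq)

lemma min_uniform_densities_Icc:
  fixes t B B' :: real
  assumes t: "0 < t" and B: "0 < B" and B': "0 < B'"
  shows "min (indicator {B..(1+t)*B} p / (t*B)) (indicator {B'..(1+t)*B'} p / (t*B'))
     = indicator {max B B'..(1+t) * min B B'} p / (t * max B B')"
proof (cases "B \<le> B'")
  case True
  moreover have "(1+t) * B \<le> (1+t) * B'" "1 / (t * B') \<le> 1 / (t * B)"
    using True t B by (auto intro!: divide_left_mono mult_left_mono)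
  ultimately show ?thesis
    using mult_pos_pos[OF t B] mult_pos_pos[OF t B']
    by (auto simp: indicator_def min_def max_def)
next
  case False
  moreover have "(1+t) * B' \<le> (1+t) * B" "1 / (t * B) \<le> 1 / (t * B')"
    using False t B' by (auto intro!: divide_left_mono mult_left_mono)
  ultimately show ?thesis
    using mult_pos_pos[OF t B] mult_pos_pos[OF t B']
    by (auto simp: indicator_def min_def max_def)
qed

lemma uniform_overlap_bound:
  fixes t B B' :: real
  assumes t: "0 < t" and B: "0 < B" and B': "0 < B'"
  shows "1 - (1+t)/t * \<bar>1 - B'/B\<bar> \<le> ((1+t) * min B B' - max B B') / (t * max B B')"
proof (cases "B \<le> B'")
  case True
  have "(B' - B) / B' \<le> (B' - B) / B"
    using True B by (intro divide_left_mono) auto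
  then have "1 - (1+t)/t * ((B' - B) / B) \<le> 1 - (1+t)/t * ((B' - B) / B')"
    using t by (intro diff_left_mono mult_left_mono) auto
  also have "\<dots> = ((1+t) * B - B') / (t * B')"
    using t B' by (simp add: field_simps)
  finally have "1 - (1+t)/t * ((B' - B) / B) \<le> ((1+t) * B - B') / (t * B')" .
  moreover have "\<bar>1 - B'/B\<bar> = (B' - B) / B"
    using True B by (simp add: abs_if diff_divide_distrib)
  ultimately show ?thesis
    using True by (simp add: min_def max_def)
next
  case False
  then show ?thesis
    using t B B' by (simp add: abs_if field_simps min_def max_def)
qed

lemma integral_min_uniform_densities_ge:
  fixes t B B' :: real
  assumes t: "0 < t" and B: "0 < B" and B': "0 < B'"
  shows "1 - (1+t)/t * \<bar>1 - B'/B\<bar>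
    \<le> (\<integral>p. min (indicator {B..(1+t)*B} p / (t*B)) (indicator {B'..(1+t)*B'} p / (t*B')) \<partial>lborel)"
proof -
  have "1 - (1+t)/t * \<bar>1 - B'/B\<bar> \<le> ((1+t) * min B B' - max B B') / (t * max B B')"
    using assms by (rule uniform_overlap_bound)
  also have "\<dots> \<le> measure lborel {max B B'..(1+t) * min B B'} / (t * max B B')"
  proof (cases "max B B' \<le> (1+t) * min B B'")
    case True
    with t B show ?thesis
      by (auto intro!: divide_right_mono)
  next
    case False
    then have "(1+t) * min B B' - max B B' \<le> 0"
      by linarith
    moreover have "0 < t * max B B'"
      using t B by simp
    ultimately have "((1+t) * min B B' - max B B') / (t * max B B') \<le> 0"
      by (rule divide_nonpos_pos)
    with False show ?thesis
      by simp
  qed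
  also have "\<dots> = (\<integral>p. indicator {max B B'..(1+t) * min B B'} p / (t * max B B') \<partial>lborel)"
    by simp
  finally show ?thesis
    by (simp only: min_uniform_densities_Icc[OF assms])
qed

lemma dual_representation_mixture_Icc_le:
  fixes D :: "'a::finite pmf \<Rightarrow> 'a pmf \<Rightarrow> real" and Pf Qf :: "real \<Rightarrow> 'a pmf"
  assumes F: "dual_representation F D"
    and t: "0 < t" and B: "0 < B" and B': "0 < B'"
    and Pf_meas: "\<And>\<omega>. set_borel_measurable borel {B..(1+t)*B} (\<lambda>p. pmf (Pf p) \<omega>)"
    and Qf_meas: "\<And>\<omega>. set_borel_measurable borel {B'..(1+t)*B'} (\<lambda>p. pmf (Qf p) \<omega>)"
    and P_mix: "\<And>\<omega>. pmf P \<omega> = (1 / (t*B)) * (LINT p:{B..(1+t)*B}|lborel. pmf (Pf p) \<omega>)"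
    and Q_mix: "\<And>\<omega>. pmf Q \<omega> = (1 / (t*B')) * (LINT p:{B'..(1+t)*B'}|lborel. pmf (Qf p) \<omega>)"
    and M: "0 \<le> M"
    and bound: "\<And>p q. p \<in> {B..(1+t)*B} \<Longrightarrow> q \<in> {B'..(1+t)*B'} \<Longrightarrow> D (Pf p) (Qf q) \<le> M"
  shows "set_integrable lborel {B..(1+t)*B} (\<lambda>p. if p \<in> {B'..(1+t)*B'} then D (Pf p) (Qf p) else 0)"
    and "D P Q \<le> (1 / (t*B)) * (LINT p:{B..(1+t)*B}|lborel. if p \<in> {B'..(1+t)*B'} then D (Pf p) (Qf p) else 0)
                  + M * ((1+t)/t) * \<bar>1 - B'/B\<bar>"
proof -
  let ?I = "{B..(1+t)*B}" and ?J = "{B'..(1+t)*B'}"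
  let ?h = "\<lambda>p. if p \<in> ?J then D (Pf p) (Qf p) else 0"
  define u where "u = (\<lambda>p. indicator ?I p / (t*B))"
  define v where "v = (\<lambda>p. indicator ?J p / (t*B'))"
  have u_pos: "0 < u p \<longleftrightarrow> p \<in> ?I" and v_pos: "0 < v p \<longleftrightarrow> p \<in> ?J" for p
    using t B B' by (auto simp: u_def v_def indicator_def)
  have "(1+t)*B - B = t*B" "(1+t)*B' - B' = t*B'"
    by (simp_all add: algebra_simps)
  then have u_density: "integrable lborel u" "(\<integral>p. u p \<partial>lborel) = 1"
    and v_density: "integrable lborel v" "(\<integral>p. v p \<partial>lborel) = 1"
    using uniform_density_Icc[of B "(1+t)*B"] uniform_density_Icc[of B' "(1+t)*B'"] t B B'
    by (simp_all add: u_def v_def)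
  have nonneg: "0 \<le> u p" "0 \<le> v p" for p
    using t B B' by (simp_all add: u_def v_def)
  have meas: "(\<lambda>p. u p * pmf (Pf p) \<omega>) \<in> borel_measurable lborel"
       "(\<lambda>p. v p * pmf (Qf p) \<omega>) \<in> borel_measurable lborel" for \<omega>
    using Pf_meas[of \<omega>] Qf_meas[of \<omega>] by (simp_all add: u_def v_def set_borel_measurable_def)
  have mix: "pmf P \<omega> = (\<integral>p. u p * pmf (Pf p) \<omega> \<partial>lborel)" "pmf Q \<omega> = (\<integral>p. v p * pmf (Qf p) \<omega> \<partial>lborel)"
    for \<omega>
    by (simp_all add: P_mix Q_mix u_def v_def set_lebesgue_integral_def mult_ac)
  note mixture = dual_representation_mixture_le[OF F nonneg u_density(1) v_density(1)
      u_density(2) v_density(2) meas mix, of M]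
  have uh: "u p * (if 0 < v p then D (Pf p) (Qf p) else 0) = (1 / (t*B)) * (indicator ?I p *\<^sub>R ?h p)" for p
    by (simp add: u_def v_pos)
  have "integrable lborel (\<lambda>p. (1 / (t*B)) * (indicator ?I p *\<^sub>R ?h p))"
    unfolding uh[symmetric] using bound by (intro mixture(1)) (simp add: u_pos v_pos)
  then show "set_integrable lborel ?I ?h"
    using t B unfolding set_integrable_def by (simp only: integrable_mult_left_iff) simp
  have "D P Q \<le> (\<integral>p. (1 / (t*B)) * (indicator ?I p *\<^sub>R ?h p) \<partial>lborel)
      + M * (1 - (\<integral>p. min (u p) (v p) \<partial>lborel))"
    unfolding uh[symmetric] using bound by (intro mixture(2)) (simp add: u_pos v_pos)
  also have "M * (1 - (\<integral>p. min (u p) (v p) \<partial>lborel)) \<le> M * ((1+t)/t * \<bar>1 - B'/B\<bar>)"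
    using integral_min_uniform_densities_ge[OF t B B'] M by (intro mult_left_mono) (auto simp: u_def v_def)
  finally show "D P Q \<le> (1 / (t*B)) * (LINT p:?I|lborel. ?h p) + M * ((1+t)/t) * \<bar>1 - B'/B\<bar>"
    by (simp add: set_lebesgue_integral_def mult.assoc)
qed

lemma set_integral_sum:
  fixes f :: "'i \<Rightarrow> 'a \<Rightarrow> 'b::{banach, second_countable_topology}"
  assumes "\<And>i. i \<in> I \<Longrightarrow> set_integrable M A (f i)"
  shows "(LINT x:A|M. (\<Sum>i\<in>I. f i x)) = (\<Sum>i\<in>I. LINT x:A|M. f i x)"
  using assms unfolding set_lebesgue_integral_def set_integrable_def scaleR_sum_right
  by (rule Bochner_Integration.integral_sum)

theorem lemma3:
  fixes D :: "'a::finite pmf \<Rightarrow> 'a pmf \<Rightarrow> real"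
    and \<rho> :: "'a \<Rightarrow> 'a \<Rightarrow> real"
    and t B M :: real and n :: nat
    and Bs :: "nat \<Rightarrow> real"
    and Pf :: "real \<Rightarrow> 'a pmf" and Qf :: "nat \<Rightarrow> real \<Rightarrow> 'a pmf"
    and P :: "'a pmf" and Q :: "nat \<Rightarrow> 'a pmf"
  assumes D_choice: "D = TV \<or> (is_metric \<rho> \<and> D = EM \<rho>)"
    and n_pos: "n > 0"
    and t_pos: "t > 0" and B_pos: "B > 0"
    and Bs_pos: "\<And>i. i \<in> {1..n} \<Longrightarrow> Bs i > 0"
    and Pf_meas: "\<And>\<omega>. set_borel_measurable borel {B..(1+t)*B} (\<lambda>p. pmf (Pf p) \<omega>)"
    and Qf_meas: "\<And>i \<omega>. i \<in> {1..n} \<Longrightarrow>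
                    set_borel_measurable borel {Bs i..(1+t)*Bs i} (\<lambda>p. pmf (Qf i p) \<omega>)"
    and P_mix: "\<And>\<omega>. pmf P \<omega> = (1 / (t*B)) * (LINT p:{B..(1+t)*B}|lborel. pmf (Pf p) \<omega>)"
    and Q_mix: "\<And>i \<omega>. i \<in> {1..n} \<Longrightarrow>
                  pmf (Q i) \<omega> = (1 / (t * Bs i)) * (LINT p:{Bs i..(1+t)*Bs i}|lborel. pmf (Qf i p) \<omega>)"
    and M_nonneg: "M \<ge> 0"
    and M_bound: "\<And>i p q. i \<in> {1..n} \<Longrightarrow> p \<in> {B..(1+t)*B} \<Longrightarrow> q \<in> {Bs i..(1+t)*Bs i} \<Longrightarrow>
                    D (Pf p) (Qf i q) \<le> M"
  shows "(1 / real n) * (\<Sum>i=1..n. D P (Q i))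
    \<le> (1 / (t*B)) * (LINT p:{B..(1+t)*B}|lborel.
          (1 / real n) * (\<Sum>i=1..n. (if p \<in> {Bs i..(1+t)*Bs i} then D (Pf p) (Qf i p) else 0)))
      + (M / real n) * ((1+t)/t) * (\<Sum>i=1..n. \<bar>1 - Bs i / B\<bar>)"
proof -
  obtain F where F: "dual_representation F D"
    using D_choice dual_representation_TV dual_representation_EM[of \<rho>] unfolding is_metric_def by blast
  let ?I = "{B..(1+t)*B}"
  let ?h = "\<lambda>i p. if p \<in> {Bs i..(1+t)*Bs i} then D (Pf p) (Qf i p) else 0"
  have integrable: "set_integrable lborel ?I (?h i)"
    and bound: "D P (Q i) \<le> (1 / (t*B)) * (LINT p:?I|lborel. ?h i p) + M * ((1+t)/t) * \<bar>1 - Bs i / B\<bar>"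
    if "i \<in> {1..n}" for i
    using dual_representation_mixture_Icc_le[OF F t_pos B_pos Bs_pos[OF that] Pf_meas Qf_meas[OF that]
        P_mix Q_mix[OF that] M_nonneg M_bound[OF that]] by blast+
  have sum_integral: "(\<Sum>i=1..n. LINT p:?I|lborel. ?h i p) = (LINT p:?I|lborel. (\<Sum>i=1..n. ?h i p))"
    using integrable by (rule set_integral_sum[symmetric])
  have "(\<Sum>i=1..n. D P (Q i))
      \<le> (\<Sum>i=1..n. (1 / (t*B)) * (LINT p:?I|lborel. ?h i p) + M * ((1+t)/t) * \<bar>1 - Bs i / B\<bar>)"
    by (rule sum_mono) (rule bound)
  also have "\<dots> = (1 / (t*B)) * (LINT p:?I|lborel. (\<Sum>i=1..n. ?h i p))
      + M * ((1+t)/t) * (\<Sum>i=1..n. \<bar>1 - Bs i / B\<bar>)"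
    by (simp only: sum.distrib sum_distrib_left[symmetric] sum_integral)
  finally have "(1 / real n) * (\<Sum>i=1..n. D P (Q i))
      \<le> (1 / real n) * ((1 / (t*B)) * (LINT p:?I|lborel. (\<Sum>i=1..n. ?h i p))
        + M * ((1+t)/t) * (\<Sum>i=1..n. \<bar>1 - Bs i / B\<bar>))"
    by (rule mult_left_mono) simp
  also have "\<dots> = (1 / (t*B)) * (LINT p:?I|lborel. (1 / real n) * (\<Sum>i=1..n. ?h i p))
      + (M / real n) * ((1+t)/t) * (\<Sum>i=1..n. \<bar>1 - Bs i / B\<bar>)"
    using n_pos t_pos B_pos by (simp only: set_integral_mult_right) (simp add: field_simps)
  finally show ?thesis .
qed

end
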